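(* The sequence $\left(\frac{H(n)}{\log n}\right)_{n=2}^\infty$ is $\mathcal I_{<1}$-convergent to $0$; that is, for every $\varepsilon>0$ the set $\{n\ge2:\frac{H(n)}{\log n}\ge\varepsilon\}$ has convergence exponent strictly less than $1$.
   Context: $\mathbb N$ denotes the set of positive integers. For $n>1$ with canonical factorization $n=p_1^{\alpha_1}\cdots p_k^{\alpha_k}$ (distinct primes $p_j$, $\alpha_j\ge1$), $H(n)=\max_{1\le j\le k}\alpha_j$. For $A\subset\mathbb N$ the convergence exponent is $\lambda(A)=\inf\{t>0:\sum_{a\in A}a^{-t}<\infty\}$, and $\mathcal I_{<1}=\{A\subset\mathbb N:\lambda(A)<1\}$. A sequence $(x_n)$ is $\mathcal I$-convergent to $L$ if for every $\varepsilon>0$ the set $\{n:|x_n-L|\ge\varepsilon\}$ belongs to $\mathcal I$. *)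

theory Defs
  imports "HOL-Analysis.Analysis" "HOL-Computational_Algebra.Primes"
begin

definition H :: "nat \<Rightarrow> nat" where
  "H n = Max ((\<lambda>p. multiplicity p n) ` prime_factors n)"

definition conv_exp :: "nat set \<Rightarrow> real" where
  "conv_exp A = Inf {t::real. t > 0 \<and> (\<lambda>a. real a powr (-t)) summable_on A}"

end

theory Submission
  imports Defs
begin

text \<open>If n \<ge> 2 has H(n) = k \<ge> \<epsilon> ln n, write n = p^k m with p prime. Then n^{2a} \<le> e^{2ak/\<epsilon>},
  and since p^{k-1} \<ge> 2^{k-1},
    n^{-(1-a)} = n^{-(1+a)} n^{2a} \<le> 2 p^{-(1+a)} r^k m^{-(1+a)}  with  r = e^{2a/\<epsilon>}/2,
  which is < 1 once a is small. As n is recovered from (p, k, m), the sum of n^{-(1-a)} over these n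
  is dominated by the convergent triple series of the right-hand side, so the convergence exponent
  is at most 1 - a < 1.\<close>

lemma summable_on_times_nonneg:
  fixes f :: "'a \<Rightarrow> real" and g :: "'b \<Rightarrow> real"
  assumes "f summable_on A" "g summable_on B"
    and "\<And>x. x \<in> A \<Longrightarrow> 0 \<le> f x" "\<And>y. y \<in> B \<Longrightarrow> 0 \<le> g y"
  shows "(\<lambda>(x, y). f x * g y) summable_on A \<times> B"
proof (rule summable_on_SigmaI)
  show "((\<lambda>y. case (x, y) of (x, y) \<Rightarrow> f x * g y) has_sum f x * infsum g B) B" for x
    using has_sum_cmult_right[OF has_sum_infsum[OF assms(2)]] by simp
  show "(\<lambda>x. f x * infsum g B) summable_on A"
    using assms(1) by (rule summable_on_cmult_left)
qed (use assms in auto)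

lemma summable_on_comparison_inj:
  fixes f :: "'a \<Rightarrow> real" and F :: "'b \<Rightarrow> real"
  assumes "F summable_on UNIV" "inj_on g A"
    and "\<And>x. x \<in> A \<Longrightarrow> 0 \<le> f x" "\<And>x. x \<in> A \<Longrightarrow> f x \<le> F (g x)"
  shows "f summable_on A"
proof (rule summable_on_comparison_test)
  have "F summable_on g ` A"
    using assms(1) by (rule summable_on_subset) auto
  then show "(F \<circ> g) summable_on A"
    using summable_on_reindex[OF assms(2), of F] by blast
qed (use assms in auto)

lemma summable_on_nat_powr_neg:
  assumes "s > 1"
  shows "(\<lambda>n::nat. real n powr -s) summable_on UNIV"
  using assms by (simp add: summable_on_UNIV_nonneg_real_iff summable_real_powr_iff)

lemma summable_on_geometric:
  fixes r :: real
  assumes "0 \<le> r" "r < 1"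
  shows "(\<lambda>k::nat. r ^ k) summable_on UNIV"
  using assms by (simp add: summable_on_UNIV_nonneg_real_iff summable_geometric)

lemma powr_neg_power_Suc_le:
  fixes p j :: nat and s :: real
  assumes "p \<ge> 2" "s \<ge> 1"
  shows "real (p ^ Suc j) powr -s \<le> real p powr -s * (1/2) ^ j"
proof -
  have pj: "real (p ^ j) \<ge> 1" using assms(1) by simp
  have "real (p ^ j) powr -s \<le> real (p ^ j) powr -1"
    using pj assms(2) by (intro powr_mono) auto
  also have "\<dots> = 1 / real p ^ j" using pj by (simp add: powr_neg_one)
  also have "\<dots> \<le> (1/2) ^ j"
    using assms(1) by (simp add: power_one_over frac_le power_mono)
  finally have "real (p ^ j) powr -s \<le> (1/2) ^ j" .
  then show ?thesis
    by (simp add: powr_mult mult_left_mono)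
qed

lemma powr_le_exp_power:
  fixes n k :: nat and a \<epsilon> :: real
  assumes "n \<ge> 1" "a \<ge> 0" "\<epsilon> > 0" "\<epsilon> * ln (real n) \<le> real k"
  shows "real n powr a \<le> exp (a / \<epsilon>) ^ k"
proof -
  have "real n powr a = exp (a * ln (real n))" using assms(1) by (simp add: powr_def)
  also have "\<dots> \<le> exp (a * (real k / \<epsilon>))"
  proof -
    have "ln (real n) \<le> real k / \<epsilon>" using assms by (simp add: pos_le_divide_eq mult.commute)
    then show ?thesis using assms(2) by (metis exp_le_cancel_iff mult_left_mono)
  qed
  also have "\<dots> = exp (real k * (a / \<epsilon>))" by simp
  also have "\<dots> = exp (a / \<epsilon>) ^ k" by (rule exp_of_nat_mult)
  finally show ?thesis .
qed

lemma powr_neg_le_of_large_prime_power_factor: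
  fixes p k m :: nat and a \<epsilon> :: real
  assumes "p \<ge> 2" "k \<ge> 1" "m \<ge> 1" "a \<ge> 0" "\<epsilon> > 0"
    and "\<epsilon> * ln (real (p ^ k * m)) \<le> real k"
  shows "real (p ^ k * m) powr -(1 - a)
           \<le> 2 * (real p powr -(1 + a) * (exp (2 * a / \<epsilon>) / 2) ^ k * real m powr -(1 + a))"
proof -
  obtain j where k: "k = Suc j" using assms(2) by (cases k) auto
  define n where "n = p ^ k * m"
  have "n \<ge> 1" using assms(1,3) by (simp add: n_def)
  have "real n powr -(1 - a) = real n powr -(1 + a) * real n powr (2 * a)"
    by (simp flip: powr_add)
  also have "\<dots> = real (p ^ k) powr -(1 + a) * real m powr -(1 + a) * real n powr (2 * a)"
    by (simp add: n_def powr_mult)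
  also have "\<dots> \<le> (real p powr -(1 + a) * (1/2) ^ j) * real m powr -(1 + a) * exp (2 * a / \<epsilon>) ^ k"
    using powr_neg_power_Suc_le[OF assms(1), of "1 + a" j]
      powr_le_exp_power[OF \<open>n \<ge> 1\<close>, of "2 * a" \<epsilon> k] assms(4-6)
    by (intro mult_mono) (auto simp: k n_def)
  also have "\<dots> = 2 * (real p powr -(1 + a) * (exp (2 * a / \<epsilon>) / 2) ^ k * real m powr -(1 + a))"
    by (simp add: k field_simps)
  finally show ?thesis by (simp add: n_def)
qed

lemma prime_power_H_factor:
  assumes "n \<ge> 2"
  shows "\<exists>p m. prime p \<and> H n \<ge> 1 \<and> n = p ^ H n * m"
proof -
  obtain q where "prime q" "q dvd n" using assms prime_factor_nat[of n] by auto
  then have "q \<in> prime_factors n" using assms by (auto simp: in_prime_factors_iff)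
  then have "H n \<in> (\<lambda>p. multiplicity p n) ` prime_factors n"
    unfolding H_def by (intro Max_in) auto
  then obtain p where p: "p \<in> prime_factors n" "H n = multiplicity p n" by blast
  have "H n \<ge> 1" using p by (simp add: prime_factors_multiplicity Suc_le_eq)
  moreover have "p ^ H n dvd n" using p by (simp add: multiplicity_dvd)
  ultimately show ?thesis using p(1) by (auto simp: in_prime_factors_iff dvd_def)
qed

lemma conv_exp_le:
  assumes "t > 0" "(\<lambda>a. real a powr -t) summable_on A"
  shows "conv_exp A \<le> t"
  unfolding conv_exp_def using assms by (intro cInf_lower bdd_belowI[where m = 0]) auto

lemma summable_on_large_H:
  fixes a \<epsilon> :: real
  assumes "\<epsilon> > 0" "a > 0" "exp (2 * a / \<epsilon>) < 2"
  shows "(\<lambda>n. real n powr -(1 - a)) summable_on {n. n \<ge> 2 \<and> \<epsilon> * ln (real n) \<le> real (H n)}"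
proof -
  define A where "A = {n. n \<ge> 2 \<and> \<epsilon> * ln (real n) \<le> real (H n)}"
  define r where "r = exp (2 * a / \<epsilon>) / 2"
  define u where "u n = real n powr -(1 + a)" for n :: nat
  define F where "F = (\<lambda>(p, k, m). 2 * (u p * (r ^ k * u m)))"
  have u_nonneg: "u n \<ge> 0" for n by (simp add: u_def)
  have "u summable_on UNIV"
    unfolding u_def using assms(2) by (intro summable_on_nat_powr_neg) simp
  moreover have "(\<lambda>k. r ^ k) summable_on UNIV"
    using assms(3) by (intro summable_on_geometric) (simp_all add: r_def)
  ultimately have "(\<lambda>(p, km). u p * (\<lambda>(k, m). r ^ k * u m) km) summable_on UNIV \<times> (UNIV \<times> UNIV)"
    using u_nonneg by (intro summable_on_times_nonneg) (auto simp: r_def)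
  from summable_on_cmult_right[OF this, of 2] have "F summable_on UNIV"
    unfolding F_def by (simp add: case_prod_unfold)
  have "\<forall>n\<in>A. \<exists>x. (case x of (p, k, m) \<Rightarrow> p ^ k * m) = n \<and> real n powr -(1 - a) \<le> F x"
  proof
    fix n assume "n \<in> A"
    define k where "k = H n"
    then have "n \<ge> 2" and "\<epsilon> * ln (real n) \<le> real k"
      using \<open>n \<in> A\<close> by (auto simp: A_def)
    then obtain p m where "prime p" "k \<ge> 1" and n: "n = p ^ k * m"
      using prime_power_H_factor k_def by blast
    then have "m \<ge> 1" using \<open>n \<ge> 2\<close> by (cases m) auto
    then have "real n powr -(1 - a) \<le> F (p, k, m)"
      using powr_neg_le_of_large_prime_power_factor[of p k m a \<epsilon>]
        \<open>prime p\<close> \<open>k \<ge> 1\<close> assms(1,2) \<open>\<epsilon> * ln (real n) \<le> real k\<close>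
      by (simp add: F_def u_def r_def prime_ge_2_nat mult.assoc n)
    then show "\<exists>x. (case x of (p, k, m) \<Rightarrow> p ^ k * m) = n \<and> real n powr -(1 - a) \<le> F x"
      using n by auto
  qed
  then obtain dec where dec_inverse: "\<And>n. n \<in> A \<Longrightarrow> (case dec n of (p, k, m) \<Rightarrow> p ^ k * m) = n"
    and dec_bound: "\<And>n. n \<in> A \<Longrightarrow> real n powr -(1 - a) \<le> F (dec n)"
    by metis
  have "inj_on dec A"
    by (rule inj_on_inverseI[where g = "\<lambda>(p, k, m). p ^ k * m"]) (rule dec_inverse)
  then have "(\<lambda>n. real n powr -(1 - a)) summable_on A"
    using \<open>F summable_on UNIV\<close> dec_bound by (intro summable_on_comparison_inj[of F dec]) simp_all
  then show ?thesis by (simp add: A_def)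
qed

theorem theorem7:
  fixes \<epsilon> :: real
  assumes "\<epsilon> > 0"
  shows "conv_exp {n::nat. n \<ge> 2 \<and> real (H n) / ln (real n) \<ge> \<epsilon>} < 1"
proof -
  define a where "a = min (\<epsilon> * ln 2 / 3) (1/2)"
  have "a > 0" using assms by (simp add: a_def)
  have "2 * a / \<epsilon> < ln 2" using assms by (simp add: a_def min_def field_simps)
  then have "exp (2 * a / \<epsilon>) < 2"
    by (metis exp_less_cancel_iff exp_ln zero_less_numeral)
  have "{n::nat. n \<ge> 2 \<and> real (H n) / ln (real n) \<ge> \<epsilon>}
          = {n. n \<ge> 2 \<and> \<epsilon> * ln (real n) \<le> real (H n)}"
    by (auto simp: pos_le_divide_eq)
  moreover have "conv_exp {n. n \<ge> 2 \<and> \<epsilon> * ln (real n) \<le> real (H n)} \<le> 1 - a"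
    using summable_on_large_H[OF assms \<open>a > 0\<close> \<open>exp (2 * a / \<epsilon>) < 2\<close>] \<open>a > 0\<close>
    by (intro conv_exp_le) (auto simp: a_def)
  ultimately show ?thesis using \<open>a > 0\<close> by simp
qed

end
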